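(* Let $r\in[n]$ and $\mu>0$ with $n\ge\mu r$. There is a universal constant $C>0$ such that for all sufficiently large $n$ and every $\delta$ with $\sqrt{4/(n-1)}<\delta<\sqrt{\mu r/n}$, $$\log\mathcal{M}(\mathbb{K}_{r,\mu},d_{2,\infty},\delta)\le C\,\frac{r^2}{\delta^2}\log n.$$
   Context: $\mathbb{K}_{r,\mu}=\{\boldsymbol{U}\in\mathbb{R}^{n\times r}:\boldsymbol{U}^\top\boldsymbol{U}=\boldsymbol{I}_r,\ \|\boldsymbol{U}\|_{2,\infty}\le\sqrt{r\mu/n}\}$, where $\|\cdot\|_{2,\infty}$ is the maximum row Euclidean norm. $d_{2,\infty}(\boldsymbol{U}_1,\boldsymbol{U}_2)=\min_{\boldsymbol{\Gamma}\in\mathbb{O}_r}\|\boldsymbol{U}_2-\boldsymbol{U}_1\boldsymbol{\Gamma}\|_{2,\infty}$. $\mathcal{M}(\mathbb{K},\rho,\delta)$ is the $\delta$-packing number: the largest cardinality of a subset of $\mathbb{K}$ whose distinct elements are at $\rho$-distance greater than $\delta$. *)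

theory Defs
  imports Complex_Main "HOL-Library.Extended_Nat" "Jordan_Normal_Form.Matrix"
begin

definition norm_2inf :: "real mat \<Rightarrow> real" where
  "norm_2inf U = Max ((\<lambda>i. sqrt (\<Sum>j<dim_col U. (U $$ (i, j))^2)) ` {..<dim_row U})"

definition Kset :: "nat \<Rightarrow> nat \<Rightarrow> real \<Rightarrow> real mat set" where
  "Kset n r \<mu> = {U. U \<in> carrier_mat n r \<and> transpose_mat U * U = 1\<^sub>m r
                    \<and> norm_2inf U \<le> sqrt (real r * \<mu> / real n)}"

definition orth_group :: "nat \<Rightarrow> real mat set" where
  "orth_group r = {G. G \<in> carrier_mat r r \<and> transpose_mat G * G = 1\<^sub>m r}"

definition d_2inf :: "nat \<Rightarrow> real mat \<Rightarrow> real mat \<Rightarrow> real" where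
  "d_2inf r U1 U2 = Inf ((\<lambda>G. norm_2inf (U2 - U1 * G)) ` orth_group r)"

definition packing_number :: "'a set \<Rightarrow> ('a \<Rightarrow> 'a \<Rightarrow> real) \<Rightarrow> real \<Rightarrow> enat" where
  "packing_number K \<rho> \<delta> = Sup {enat (card S) | S. S \<subseteq> K \<and> finite S \<and>
      (\<forall>x\<in>S. \<forall>y\<in>S. x \<noteq> y \<longrightarrow> \<rho> x y > \<delta>)}"

end

theory Submission
  imports Defs "HOL-Analysis.L2_Norm" "HOL-Library.FuncSet"
begin

text \<open>Quantize \<open>U \<in> Kset n r \<mu>\<close> by rounding every row of Euclidean norm at least \<open>\<delta>/2\<close>
  to the grid \<open>\<int>\<^sup>r/n\<close> and replacing every other row by zero. The squared row norms sum to
  \<open>r\<close> (the columns are orthonormal), so at most \<open>m = \<lfloor>4r/\<delta>\<^sup>2\<rfloor>\<close> rows survive, and all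
  entries have modulus at most 1; hence there are at most \<open>(n+1)^m (2n+1)^(rm)\<close>
  quantizations. Two matrices with the same quantization are row-wise within \<open>\<delta>\<close> of each
  other (take \<open>\<Gamma> = I\<close>), so a \<open>\<delta>\<close>-packing contains at most one matrix per quantization, and
  taking logarithms gives the bound with \<open>C = 16\<close> for \<open>n \<ge> 3\<close>.\<close>

lemma abs_sub_round_mult_div_le:
  assumes "n > 0"
  shows "\<bar>x - real_of_int (round (real n * x)) / real n\<bar> \<le> 1 / (2 * real n)"
proof -
  have "\<bar>x - real_of_int (round (real n * x)) / real n\<bar>
        = \<bar>real_of_int (round (real n * x)) - real n * x\<bar> / real n"
    using assms by (simp add: field_simps abs_minus_commute)
  also have "\<dots> \<le> (1/2) / real n"
    by (intro divide_right_mono of_int_round_abs_le) simp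
  finally show ?thesis by simp
qed

lemma abs_round_mult_le:
  assumes "\<bar>x\<bar> \<le> 1"
  shows "\<bar>round (real n * x)\<bar> \<le> int n"
proof -
  have "\<bar>real n * x\<bar> \<le> real n"
    using assms by (simp add: abs_mult mult_left_le)
  moreover have "\<bar>real_of_int (round (real n * x)) - real n * x\<bar> \<le> 1/2"
    by (rule of_int_round_abs_le)
  ultimately have "\<bar>round (real n * x)\<bar> < int n + 1" by linarith
  thus ?thesis by simp
qed

definition row_norm :: "real mat \<Rightarrow> nat \<Rightarrow> real" where
  "row_norm U i = L2_set (\<lambda>j. U $$ (i, j)) {..<dim_col U}"

lemma norm_2inf_row_norm: "norm_2inf U = Max (row_norm U ` {..<dim_row U})"
  unfolding norm_2inf_def row_norm_def L2_set_def ..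

lemma norm_2inf_nonneg:
  assumes "dim_row U > 0"
  shows "norm_2inf U \<ge> 0"
proof -
  have "row_norm U 0 \<le> norm_2inf U"
    unfolding norm_2inf_row_norm using assms by (intro Max_ge) auto
  moreover have "row_norm U 0 \<ge> 0" by (simp add: row_norm_def L2_set_nonneg)
  ultimately show ?thesis by linarith
qed

lemma norm_2inf_le:
  assumes "dim_row U > 0" "\<And>i. i < dim_row U \<Longrightarrow> row_norm U i \<le> d"
  shows "norm_2inf U \<le> d"
  unfolding norm_2inf_row_norm using assms by (subst Max_le_iff) auto

lemma d_2inf_le_norm_2inf_diff:
  assumes "U \<in> carrier_mat n r" "n > 0"
  shows "d_2inf r U V \<le> norm_2inf (V - U)"
proof -
  have "1\<^sub>m r \<in> orth_group r" unfolding orth_group_def by simp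
  moreover have "bdd_below ((\<lambda>G. norm_2inf (V - U * G)) ` orth_group r)"
    using assms by (intro bdd_belowI[of _ 0]) (auto intro!: norm_2inf_nonneg)
  ultimately have "d_2inf r U V \<le> norm_2inf (V - U * 1\<^sub>m r)"
    unfolding d_2inf_def by (intro cInf_lower) auto
  thus ?thesis using assms by simp
qed

context
  fixes U :: "real mat" and n r :: nat
  assumes carrier: "U \<in> carrier_mat n r" and orthonormal: "transpose_mat U * U = 1\<^sub>m r"
begin

lemma sum_sq_column_eq_1:
  assumes "j < r"
  shows "(\<Sum>i<n. (U $$ (i, j))^2) = 1"
proof -
  have "(\<Sum>i<n. (U $$ (i, j))^2) = (transpose_mat U * U) $$ (j, j)"
    using carrier assms by (simp add: scalar_prod_def power2_eq_square atLeast0LessThan)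
  thus ?thesis using orthonormal assms by simp
qed

lemma abs_entry_le_1:
  assumes "i < n" "j < r"
  shows "\<bar>U $$ (i, j)\<bar> \<le> 1"
proof -
  have "(U $$ (i, j))^2 \<le> (\<Sum>i<n. (U $$ (i, j))^2)"
    using assms by (intro member_le_sum) auto
  thus ?thesis using sum_sq_column_eq_1[OF assms(2)] by (simp add: abs_square_le_1)
qed

lemma sum_row_norm_sq: "(\<Sum>i<n. (row_norm U i)^2) = real r"
proof -
  have "(\<Sum>i<n. (row_norm U i)^2) = (\<Sum>i<n. \<Sum>j<r. (U $$ (i,j))^2)"
    using carrier unfolding row_norm_def L2_set_def by (simp add: sum_nonneg)
  also have "\<dots> = (\<Sum>j<r. \<Sum>i<n. (U $$ (i,j))^2)" by (rule sum.swap)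
  also have "\<dots> = real r" using sum_sq_column_eq_1 by simp
  finally show ?thesis .
qed

lemma card_heavy_rows_le:
  assumes "\<epsilon> > 0"
  shows "card {i. i < n \<and> \<epsilon> \<le> row_norm U i} \<le> nat \<lfloor>real r / \<epsilon>^2\<rfloor>"
proof -
  define L where "L = {i. i < n \<and> \<epsilon> \<le> row_norm U i}"
  have "\<epsilon>^2 * real (card L) = (\<Sum>i\<in>L. \<epsilon>^2)" by simp
  also have "\<dots> \<le> (\<Sum>i\<in>L. (row_norm U i)^2)"
    using assms by (intro sum_mono power_mono) (auto simp: L_def)
  also have "\<dots> \<le> (\<Sum>i<n. (row_norm U i)^2)"
    by (intro sum_mono2) (auto simp: L_def)
  finally have "real (card L) \<le> real r / \<epsilon>^2"
    using assms by (simp add: sum_row_norm_sq field_simps)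
  thus ?thesis unfolding L_def by (rule le_nat_floor)
qed

end

definition quantize :: "real \<Rightarrow> real mat \<Rightarrow> nat \<times> nat \<Rightarrow> int" where
  "quantize \<epsilon> U = (\<lambda>(i, j).
     if i < dim_row U \<and> j < dim_col U \<and> \<epsilon> \<le> row_norm U i
     then round (real (dim_row U) * U $$ (i, j)) else 0)"

lemma row_quantize_error_le:
  assumes i: "i < dim_row U"
    and \<epsilon>: "sqrt (real (dim_col U)) / (2 * real (dim_row U)) \<le> \<epsilon>"
  shows "L2_set (\<lambda>j. U $$ (i, j) - real_of_int (quantize \<epsilon> U (i, j)) / real (dim_row U))
           {..<dim_col U} \<le> \<epsilon>"
proof (cases "\<epsilon> \<le> row_norm U i")
  case True
  let ?n = "real (dim_row U)"
  have "L2_set (\<lambda>j. U $$ (i, j) - real_of_int (quantize \<epsilon> U (i, j)) / ?n) {..<dim_col U}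
      = L2_set (\<lambda>j. \<bar>U $$ (i, j) - real_of_int (round (?n * U $$ (i, j))) / ?n\<bar>) {..<dim_col U}"
    using True i unfolding L2_set_def quantize_def by (intro arg_cong[where f=sqrt] sum.cong) auto
  also have "\<dots> \<le> L2_set (\<lambda>j. 1 / (2 * ?n)) {..<dim_col U}"
    using i by (intro L2_set_mono abs_sub_round_mult_div_le) auto
  also have "\<dots> \<le> \<epsilon>" using \<epsilon> by (simp add: L2_set_constant)
  finally show ?thesis .
next
  case False
  then show ?thesis by (simp add: quantize_def row_norm_def)
qed

lemma d_2inf_le_if_quantize_eq:
  assumes U: "U \<in> carrier_mat n r" and V: "V \<in> carrier_mat n r" and "n > 0"
    and \<epsilon>: "sqrt (real r) / (2 * real n) \<le> \<epsilon>"
    and eq: "quantize \<epsilon> U = quantize \<epsilon> V"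
  shows "d_2inf r U V \<le> 2 * \<epsilon>"
proof -
  have "norm_2inf (V - U) \<le> 2 * \<epsilon>"
  proof (rule norm_2inf_le)
    show "dim_row (V - U) > 0" using U \<open>n > 0\<close> by simp
    fix i assume "i < dim_row (V - U)"
    hence i: "i < n" using U by simp
    define w where "w j = real_of_int (quantize \<epsilon> U (i, j)) / real n" for j
    have errU: "L2_set (\<lambda>j. w j - U $$ (i, j)) {..<r} \<le> \<epsilon>"
      using row_quantize_error_le[of i U \<epsilon>] U i \<epsilon>
      unfolding w_def L2_set_def by (simp add: power2_commute)
    have errV: "L2_set (\<lambda>j. V $$ (i, j) - w j) {..<r} \<le> \<epsilon>"
      using row_quantize_error_le[of i V \<epsilon>] V i \<epsilon> unfolding w_def eq by simp
    have "row_norm (V - U) i = L2_set (\<lambda>j. (V $$ (i, j) - w j) + (w j - U $$ (i, j))) {..<r}"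
      unfolding row_norm_def using U i by (intro L2_set_cong) auto
    also have "\<dots> \<le> L2_set (\<lambda>j. V $$ (i, j) - w j) {..<r} + L2_set (\<lambda>j. w j - U $$ (i, j)) {..<r}"
      by (rule L2_set_triangle_ineq)
    finally show "row_norm (V - U) i \<le> 2 * \<epsilon>" using errU errV by linarith
  qed
  thus ?thesis using d_2inf_le_norm_2inf_diff[OF U \<open>n > 0\<close>, of V] by linarith
qed

definition row_sparse_int_funs :: "nat \<Rightarrow> nat \<Rightarrow> nat \<Rightarrow> nat \<Rightarrow> (nat \<times> nat \<Rightarrow> int) set" where
  "row_sparse_int_funs n r m M = {f. \<exists>L \<subseteq> {..<n}. card L \<le> m \<and>
     (\<forall>i j. f (i, j) \<noteq> 0 \<longrightarrow> i \<in> L \<and> j < r) \<and> (\<forall>x. \<bar>f x\<bar> \<le> int M)}"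

lemma quantize_in_row_sparse_int_funs:
  assumes U: "U \<in> carrier_mat n r" "transpose_mat U * U = 1\<^sub>m r" and "\<epsilon> > 0"
  shows "quantize \<epsilon> U \<in> row_sparse_int_funs n r (nat \<lfloor>real r / \<epsilon>^2\<rfloor>) n"
proof -
  let ?L = "{i. i < n \<and> \<epsilon> \<le> row_norm U i}"
  have "\<bar>quantize \<epsilon> U x\<bar> \<le> int n" for x
    using U abs_entry_le_1[OF U] by (cases x) (auto simp: quantize_def intro!: abs_round_mult_le)
  moreover have "quantize \<epsilon> U (i, j) \<noteq> 0 \<Longrightarrow> i \<in> ?L \<and> j < r" for i j
    using U by (auto simp: quantize_def split: if_splits)
  ultimately show ?thesis
    unfolding row_sparse_int_funs_def
    using card_heavy_rows_le[OF U \<open>\<epsilon> > 0\<close>] by (intro CollectI exI[of _ ?L]) auto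
qed

text \<open>A row-sparse matrix is encoded by the list \<open>g\<close> of its support rows, padded with the
  out-of-range index \<open>n\<close>, together with the entries \<open>v l\<close> of row \<open>g l\<close>.\<close>

definition rows_decode ::
  "nat \<Rightarrow> nat \<Rightarrow> nat \<Rightarrow> (nat \<Rightarrow> nat) \<times> (nat \<Rightarrow> nat \<Rightarrow> int) \<Rightarrow> nat \<times> nat \<Rightarrow> int" where
  "rows_decode n r m = (\<lambda>(g, v) (i, j).
     if i < n \<and> j < r \<and> i \<in> g ` {..<m} then v (inv_into {..<m} g i) j else 0)"

lemma obtain_padded_enumeration:
  fixes n m :: nat
  assumes "L \<subseteq> {..<n}" "card L \<le> m"
  obtains g where "g \<in> {..<m} \<rightarrow>\<^sub>E {..n}" "\<And>i. i < n \<Longrightarrow> i \<in> g ` {..<m} \<longleftrightarrow> i \<in> L"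
proof -
  have "finite L" using assms(1) by (rule finite_subset) simp
  then obtain e where e: "bij_betw e {0..<card L} L" by (blast dest: ex_bij_betw_nat_finite)
  define g where "g = restrict (\<lambda>l. if l < card L then e l else n) {..<m}"
  have eL: "e l \<in> L" if "l < card L" for l using e that by (auto simp: bij_betw_def)
  have "e l \<le> n" if "l < card L" for l
    using eL[OF that] assms(1) by (meson lessThan_iff less_imp_le subsetD)
  then have "g \<in> {..<m} \<rightarrow>\<^sub>E {..n}" by (auto simp: g_def)
  moreover have "i \<in> g ` {..<m} \<longleftrightarrow> i \<in> L" if "i < n" for i
  proof
    assume "i \<in> g ` {..<m}"
    thus "i \<in> L" using eL that by (auto simp: g_def split: if_splits)
  next
    assume "i \<in> L"
    then obtain l where "l < card L" "e l = i" using e by (force simp: bij_betw_def)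
    thus "i \<in> g ` {..<m}" using assms(2) by (intro image_eqI[of _ _ l]) (auto simp: g_def)
  qed
  ultimately show ?thesis by (rule that)
qed

lemma row_sparse_int_funs_subset_rows_decode:
  "row_sparse_int_funs n r m M \<subseteq>
     rows_decode n r m ` (({..<m} \<rightarrow>\<^sub>E {..n}) \<times> ({..<m} \<rightarrow>\<^sub>E {..<r} \<rightarrow>\<^sub>E {-int M..int M}))"
proof
  fix f assume "f \<in> row_sparse_int_funs n r m M"
  then obtain L where L: "L \<subseteq> {..<n}" "card L \<le> m"
    and supp: "\<And>i j. f (i, j) \<noteq> 0 \<Longrightarrow> i \<in> L \<and> j < r" and bound: "\<And>x. \<bar>f x\<bar> \<le> int M"
    unfolding row_sparse_int_funs_def by blast
  obtain g where g_range: "g \<in> {..<m} \<rightarrow>\<^sub>E {..n}"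
    and g_image: "\<And>i. i < n \<Longrightarrow> i \<in> g ` {..<m} \<longleftrightarrow> i \<in> L"
    using obtain_padded_enumeration[OF L] by blast
  define v where "v = restrict (\<lambda>l. restrict (\<lambda>j. f (g l, j)) {..<r}) {..<m}"
  have "f x \<in> {-int M..int M}" for x using bound[of x] by auto
  then have v_range: "v \<in> {..<m} \<rightarrow>\<^sub>E {..<r} \<rightarrow>\<^sub>E {-int M..int M}"
    by (simp add: v_def restrict_PiE_iff)
  have "rows_decode n r m (g, v) = f"
    unfolding rows_decode_def
  proof (intro ext, clarify)
    fix i j
    show "(if i < n \<and> j < r \<and> i \<in> g ` {..<m} then v (inv_into {..<m} g i) j else 0) = f (i, j)"
    proof (cases "i < n \<and> j < r \<and> i \<in> g ` {..<m}")
      case True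
      then have "i \<in> g ` {..<m}" by blast
      then have "inv_into {..<m} g i \<in> {..<m}" and "g (inv_into {..<m} g i) = i"
        by (rule inv_into_into, rule f_inv_into_f)
      with True show ?thesis by (simp add: v_def)
    next
      case False
      then show ?thesis using supp[of i j] g_image L(1) by auto
    qed
  qed
  with g_range v_range show "f \<in> rows_decode n r m ` (({..<m} \<rightarrow>\<^sub>E {..n}) \<times>
      ({..<m} \<rightarrow>\<^sub>E {..<r} \<rightarrow>\<^sub>E {-int M..int M}))"
    by (intro rev_image_eqI[of "(g, v)"]) auto
qed

lemma finite_card_row_sparse_int_funs:
  "finite (row_sparse_int_funs n r m M) \<and>
   card (row_sparse_int_funs n r m M) \<le> (n + 1) ^ m * (2 * M + 1) ^ (r * m)"
proof -
  let ?T = "({..<m} \<rightarrow>\<^sub>E {..n}) \<times> ({..<m} \<rightarrow>\<^sub>E {..<r} \<rightarrow>\<^sub>E {-int M..int M})"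
  have T: "finite ?T" by (intro finite_cartesian_product finite_PiE) auto
  have "card {-int M..int M} = 2 * M + 1" by simp
  then have "card ?T = (n + 1) ^ m * ((2 * M + 1) ^ r) ^ m"
    by (simp add: card_cartesian_product card_PiE del: card_atLeastAtMost_int)
  then have card_T: "card ?T = (n + 1) ^ m * (2 * M + 1) ^ (r * m)"
    by (simp add: power_mult)
  have sub: "row_sparse_int_funs n r m M \<subseteq> rows_decode n r m ` ?T"
    by (rule row_sparse_int_funs_subset_rows_decode)
  then have fin: "finite (row_sparse_int_funs n r m M)"
    using T by (rule finite_subset[OF _ finite_imageI])
  have "card (row_sparse_int_funs n r m M) \<le> card (rows_decode n r m ` ?T)"
    using sub T by (intro card_mono) auto
  also have "\<dots> \<le> card ?T" using T by (rule card_image_le)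
  finally show ?thesis using fin card_T by simp
qed

lemma packing_number_le_card:
  assumes "finite Q" "q ` K \<subseteq> Q"
    and close: "\<And>x y. x \<in> K \<Longrightarrow> y \<in> K \<Longrightarrow> q x = q y \<Longrightarrow> \<rho> x y \<le> \<delta>"
  shows "packing_number K \<rho> \<delta> \<le> enat (card Q)"
  unfolding packing_number_def
proof (rule Sup_least)
  fix k assume "k \<in> {enat (card S) |S. S \<subseteq> K \<and> finite S \<and> (\<forall>x\<in>S. \<forall>y\<in>S. x \<noteq> y \<longrightarrow> \<delta> < \<rho> x y)}"
  then obtain S where k: "k = enat (card S)" and S: "S \<subseteq> K"
    and sep: "\<forall>x\<in>S. \<forall>y\<in>S. x \<noteq> y \<longrightarrow> \<delta> < \<rho> x y"
    by blast
  have "inj_on q S"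
  proof (rule inj_onI, rule ccontr)
    fix x y assume xy: "x \<in> S" "y \<in> S" "q x = q y" "x \<noteq> y"
    then have "\<rho> x y \<le> \<delta>" using S close by blast
    moreover have "\<delta> < \<rho> x y" using sep xy by blast
    ultimately show False by simp
  qed
  then have "card S = card (q ` S)" by (simp add: card_image)
  also have "\<dots> \<le> card Q" using assms(1,2) S by (intro card_mono) auto
  finally show "k \<le> enat (card Q)" using k by simp
qed

lemma packing_number_Kset_le:
  assumes "n > 0" "\<delta> > 0" "sqrt (real r) / real n \<le> \<delta>"
  defines "m \<equiv> nat \<lfloor>4 * real r / \<delta>^2\<rfloor>"
  shows "packing_number (Kset n r \<mu>) (d_2inf r) \<delta> \<le> enat ((n + 1) ^ m * (2 * n + 1) ^ (r * m))"
proof -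
  have "packing_number (Kset n r \<mu>) (d_2inf r) \<delta> \<le> enat (card (row_sparse_int_funs n r m n))"
  proof (rule packing_number_le_card[where q = "quantize (\<delta> / 2)"])
    have "real r / (\<delta> / 2)^2 = 4 * real r / \<delta>^2" by (simp add: power_divide)
    then show "quantize (\<delta> / 2) ` Kset n r \<mu> \<subseteq> row_sparse_int_funs n r m n"
      using quantize_in_row_sparse_int_funs[of _ n r "\<delta> / 2"] assms(2)
      unfolding m_def Kset_def by auto
    have "sqrt (real r) / (2 * real n) \<le> \<delta> / 2" using assms(3) by simp
    then show "d_2inf r U V \<le> \<delta>"
      if "U \<in> Kset n r \<mu>" "V \<in> Kset n r \<mu>" "quantize (\<delta> / 2) U = quantize (\<delta> / 2) V" for U V
      using d_2inf_le_if_quantize_eq[of U n r V "\<delta> / 2"] that assms(1)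
      unfolding Kset_def by simp
  qed (simp add: finite_card_row_sparse_int_funs)
  then show ?thesis
    using finite_card_row_sparse_int_funs[of n r m n] order.trans by fastforce
qed

lemma sqrt_div_le_sqrt_four_div:
  assumes "r \<le> n" "n \<ge> 2"
  shows "sqrt (real r) / real n \<le> sqrt (4 / (real n - 1))"
proof (rule real_le_rsqrt)
  have "(sqrt (real r) / real n)^2 = real r / real n ^ 2" by (simp add: power_divide)
  also have "\<dots> \<le> real n / real n ^ 2" using assms(1) by (intro divide_right_mono) auto
  also have "\<dots> = 1 / real n" by (simp add: power2_eq_square)
  also have "\<dots> \<le> 4 / (real n - 1)" using assms(2) by (simp add: field_simps)
  finally show "(sqrt (real r) / real n)^2 \<le> 4 / (real n - 1)" .
qed

lemma ln_code_size_le: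
  assumes "n \<ge> 3" "r \<ge> 1"
  shows "ln (real ((n + 1) ^ m * (2 * n + 1) ^ (r * m))) \<le> 4 * real r * real m * ln (real n)"
proof -
  have n3: "real n \<ge> 3" using assms(1) by simp
  then have "real n * 3 \<le> real n * real n" by (intro mult_left_mono) auto
  then have "2 * real n + 1 \<le> real n ^ 2" using n3 unfolding power2_eq_square by linarith
  then have "ln (2 * real n + 1) \<le> ln (real n ^ 2)" using n3 by simp
  then have ln2: "ln (2 * real n + 1) \<le> 2 * ln (real n)"
    using n3 by (simp add: ln_realpow)
  have "ln (real n + 1) \<le> ln (2 * real n + 1)" by simp
  with ln2 have ln1: "ln (real n + 1) \<le> 2 * ln (real n)" by linarith
  have "ln (real ((n + 1) ^ m * (2 * n + 1) ^ (r * m)))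
        = real m * ln (real n + 1) + real (r * m) * ln (2 * real n + 1)"
    by (simp add: ln_mult ln_realpow add_pos_pos add.commute)
  also have "\<dots> \<le> real m * (2 * ln (real n)) + real (r * m) * (2 * ln (real n))"
    using ln1 ln2 by (intro add_mono mult_left_mono) auto
  also have "\<dots> = 2 * (1 + real r) * real m * ln (real n)" by (simp add: algebra_simps)
  also have "\<dots> \<le> 4 * real r * real m * ln (real n)"
    using assms by (intro mult_right_mono) auto
  finally show ?thesis .
qed

lemma ln_packing_number_Kset_le:
  assumes "n \<ge> 3" "r \<ge> 1" "\<delta> > 0" "sqrt (real r) / real n \<le> \<delta>"
  shows "packing_number (Kset n r \<mu>) (d_2inf r) \<delta> \<noteq> \<infinity> \<and>
         ln (real (the_enat (packing_number (Kset n r \<mu>) (d_2inf r) \<delta>)))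
           \<le> 16 * real r ^ 2 / \<delta> ^ 2 * ln (real n)"
proof -
  define m where "m = nat \<lfloor>4 * real r / \<delta>^2\<rfloor>"
  define B where "B = (n + 1) ^ m * (2 * n + 1) ^ (r * m)"
  have "packing_number (Kset n r \<mu>) (d_2inf r) \<delta> \<le> enat B"
    unfolding B_def m_def using assms by (intro packing_number_Kset_le) auto
  then obtain k where k: "packing_number (Kset n r \<mu>) (d_2inf r) \<delta> = enat k" "k \<le> B"
    by (cases "packing_number (Kset n r \<mu>) (d_2inf r) \<delta>") auto
  have "B > 0" unfolding B_def by simp
  have "ln (real k) \<le> ln (real B)"
  proof (cases "k = 0")
    case True
    then show ?thesis using \<open>B > 0\<close> by simp
  next
    case False
    then show ?thesis using k(2) by simp
  qed
  also have "\<dots> \<le> 4 * real r * real m * ln (real n)"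
    unfolding B_def using assms(1,2) by (rule ln_code_size_le)
  also have "\<dots> \<le> 4 * real r * (4 * real r / \<delta>^2) * ln (real n)"
  proof -
    have "real m \<le> 4 * real r / \<delta>^2" unfolding m_def using assms(3) by simp
    moreover have "ln (real n) \<ge> 0" using assms(1) by simp
    ultimately show ?thesis by (intro mult_right_mono mult_left_mono) auto
  qed
  also have "\<dots> = 16 * real r ^ 2 / \<delta> ^ 2 * ln (real n)" by (simp add: power2_eq_square)
  finally show ?thesis using k(1) by simp
qed

theorem lemma16:
  shows "\<exists>C>0. \<exists>N::nat. \<forall>n\<ge>N. \<forall>r \<mu> \<delta>.
     1 \<le> r \<and> r \<le> n \<and> \<mu> > 0 \<and> real n \<ge> \<mu> * real r \<and>
     sqrt (4 / (real n - 1)) < \<delta> \<and> \<delta> < sqrt (\<mu> * real r / real n) \<longrightarrow>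
       packing_number (Kset n r \<mu>) (d_2inf r) \<delta> \<noteq> \<infinity> \<and>
       ln (real (the_enat (packing_number (Kset n r \<mu>) (d_2inf r) \<delta>)))
         \<le> C * real r ^ 2 / \<delta> ^ 2 * ln (real n)"
proof -
  have "packing_number (Kset n r \<mu>) (d_2inf r) \<delta> \<noteq> \<infinity> \<and>
        ln (real (the_enat (packing_number (Kset n r \<mu>) (d_2inf r) \<delta>)))
          \<le> 16 * real r ^ 2 / \<delta> ^ 2 * ln (real n)"
    if n: "n \<ge> 3" and r: "1 \<le> r" "r \<le> n" and \<delta>: "sqrt (4 / (real n - 1)) < \<delta>"
    for n r :: nat and \<mu> \<delta> :: real
  proof (rule ln_packing_number_Kset_le)
    have "0 \<le> sqrt (4 / (real n - 1))" using n by simp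
    then show "0 < \<delta>" using \<delta> by linarith
    show "sqrt (real r) / real n \<le> \<delta>"
      using sqrt_div_le_sqrt_four_div[of r n] r n \<delta> by simp
  qed (use n r in auto)
  then show ?thesis by (intro exI[of _ "16::real"] conjI exI[of _ "3::nat"]) auto
qed

end
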